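(* Let $m\in[\frac n4..\frac n2-1]$ be an integer and $\delta\in(0,2)$. Let $x$ be a random bit string in $\{0,1\}^n$ such that $\mathrm{DLB}(x)=2m$ and such that the bits $x_i$, $i\in[2m+3..n]$, are mutually independent, independent of the other bits, and uniformly distributed in $\{0,1\}$. Let $y$ be generated from $x$ by a unary unbiased variation operator $V$, and let $Y=(\mathrm{HLB}_\delta(y)-\mathrm{HLB}_\delta(x))\mathbb{1}_{\mathrm{DLB}(y)\ge\mathrm{DLB}(x)}$. Then $E[Y]\le\frac{2\delta}{n}$.
   Context: Let $n$ be an even positive integer. For $x\in\{0,1\}^n$ consider the blocks $(x_{2\ell+1},x_{2\ell+2})$, $\ell=0,\dots,\frac n2-1$. If $x\neq(1,\dots,1)$, let $m$ be the smallest $\ell$ with $x_{2\ell+1}\neq 1$ or $x_{2\ell+2}\neq 1$, and define $\mathrm{DLB}(x)=2m+1$ if $x_{2m+1}+x_{2m+2}=0$ and $\mathrm{DLB}(x)=2m$ if $x_{2m+1}+x_{2m+2}=1$; set $\mathrm{DLB}(1,\dots,1)=n$. For $\delta\in(0,2)$, $\mathrm{HLB}_\delta(x)=2m$ if $\mathrm{DLB}(x)=2m+1$, $\mathrm{HLB}_\delta(x)=2m+2-\delta$ if $\mathrm{DLB}(x)=2m$ (for $m\in\{0,\dots,\frac n2-1\}$), and $\mathrm{HLB}_\delta(x)=n$ if $\mathrm{DLB}(x)=n$. A unary unbiased variation operator $V$ assigns to each $x\in\{0,1\}^n$ a probability distribution $V(x)$ on $\{0,1\}^n$ such that for all $x,y,z$,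 $\Pr[y=V(x)]=\Pr[y\oplus z=V(x\oplus z)]$, and for all permutations $\sigma$ of $[1..n]$, $\Pr[y=V(x)]=\Pr[\sigma(y)=V(\sigma(x))]$, where $\sigma(x)=(x_{\sigma(1)},\dots,x_{\sigma(n)})$. *)

theory Defs
  imports "HOL-Probability.Probability" "HOL-Combinatorics.Permutations"
begin

text \<open>Bit strings in {0,1}^n are represented as bool lists of length n;
  the paper's bit x_i (1-based) is x ! (i - 1). True = 1, False = 0.\<close>

definition block_full :: "bool list \<Rightarrow> nat \<Rightarrow> bool" where
  "block_full x l \<longleftrightarrow> x ! (2*l) \<and> x ! (2*l+1)"

definition DLB :: "bool list \<Rightarrow> nat" where
  "DLB x = (let n = length x in
     if \<forall>l < n div 2. block_full x l then n
     else (let m = (LEAST l. l < n div 2 \<and> \<not> block_full x l) in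
           if \<not> x ! (2*m) \<and> \<not> x ! (2*m+1) then 2*m+1 else 2*m))"

definition HLB :: "real \<Rightarrow> bool list \<Rightarrow> real" where
  "HLB \<delta> x = (let d = DLB x in
     if d = length x then real (length x)
     else if odd d then real (d - 1)
     else real d + 2 - \<delta>)"

definition xor_bits :: "bool list \<Rightarrow> bool list \<Rightarrow> bool list" where
  "xor_bits x z = map2 (\<noteq>) x z"

definition perm_bits :: "(nat \<Rightarrow> nat) \<Rightarrow> bool list \<Rightarrow> bool list" where
  "perm_bits \<sigma> x = map (\<lambda>i. x ! \<sigma> i) [0..<length x]"

definition unary_unbiased :: "nat \<Rightarrow> (bool list \<Rightarrow> bool list pmf) \<Rightarrow> bool" where
  "unary_unbiased n V \<longleftrightarrow>
     (\<forall>x. length x = n \<longrightarrow> set_pmf (V x) \<subseteq> {y. length y = n}) \<and>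
     (\<forall>x y z. length x = n \<and> length y = n \<and> length z = n \<longrightarrow>
        pmf (V x) y = pmf (V (xor_bits x z)) (xor_bits y z)) \<and>
     (\<forall>\<sigma> x y. \<sigma> permutes {..<n} \<and> length x = n \<and> length y = n \<longrightarrow>
        pmf (V x) y = pmf (V (perm_bits \<sigma> x)) (perm_bits \<sigma> y))"

end

theory Submission
  imports Defs
begin

(*
  By unbiasedness, the offspring of x is x xor S for a random mask S whose law
  W = V (0...0) is invariant under permutations of the positions. Split x = u @ v into
  its first 2m+2 bits u = 1^(2m) 01 or 1^(2m) 10 and the uniform suffix v. The gain Y
  vanishes unless S, restricted to the first 2m+2 positions, flips exactly one bit of
  block m: flipping its 1 loses 2 - delta, flipping its 0 gains delta + HLB of the
  scrambled suffix, which is at most 2 + delta on average over v. By permutation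
  invariance both flips have the same probability P, so E[Y] <= 2 delta P. Finally
  P <= 1/n: if w k is the probability of one fixed mask with k ones, then
  P = sum_j C(t, j) w (j+1) with t = n - 2m - 2 and sum_k C(n, k) w k = 1, while
  n C(t, j) <= C(n, j+1) as soon as 2t + 2 <= n, which is where m >= n/4 is used.
*)

section \<open>Leading blocks\<close>

lemma DLB_eq_first_nonfull:
  assumes "l < length x div 2" "\<not> block_full x l" "\<forall>l'<l. block_full x l'"
  shows "DLB x = (if \<not> x ! (2*l) \<and> \<not> x ! (2*l+1) then 2*l+1 else 2*l)"
proof -
  have "(LEAST l. l < length x div 2 \<and> \<not> block_full x l) = l"
    using assms by (intro Least_equality) (auto simp: not_less)
  then show ?thesis
    using assms(1,2) by (auto simp: DLB_def Let_def)
qed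

lemma DLB_Cons_Cons:
  "DLB (a # b # t) = (if a \<and> b then 2 + DLB t else if \<not> a \<and> \<not> b then 1 else 0)"
proof (cases "a \<and> b")
  case True
  then have full0: "block_full (a # b # t) 0"
    by (simp add: block_full_def)
  have shift: "block_full (a # b # t) (Suc l) = block_full t l" for l
    by (simp add: block_full_def)
  show ?thesis
  proof (cases "\<forall>l < length t div 2. block_full t l")
    case True
    then have "\<forall>l < length (a # b # t) div 2. block_full (a # b # t) l"
      using full0 by (auto simp: shift less_Suc_eq_0_disj)
    with True \<open>a \<and> b\<close> show ?thesis
      by (simp add: DLB_def)
  next
    case False
    then obtain l where l: "l < length t div 2" "\<not> block_full t l" "\<forall>l'<l. block_full t l'"
      using exists_least_iff[of "\<lambda>l. l < length t div 2 \<and> \<not> block_full t l"]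
      by (metis order.strict_trans)
    have "DLB (a # b # t) = (if \<not> t ! (2*l) \<and> \<not> t ! (2*l+1) then 2*Suc l+1 else 2*Suc l)"
      using l full0 by (subst DLB_eq_first_nonfull[of "Suc l"]) (auto simp: shift less_Suc_eq_0_disj)
    moreover have "DLB t = (if \<not> t ! (2*l) \<and> \<not> t ! (2*l+1) then 2*l+1 else 2*l)"
      using l by (rule DLB_eq_first_nonfull)
    ultimately show ?thesis
      using \<open>a \<and> b\<close> by simp
  qed
next
  case False
  then show ?thesis
    by (subst DLB_eq_first_nonfull[of 0]) (auto simp: block_full_def)
qed

lemma DLB_Nil [simp]: "DLB [] = 0"
  by (simp add: DLB_def)

lemma DLB_le_length: "even (length x) \<Longrightarrow> DLB x \<le> length x"
  by (induction x rule: induct_list012) (auto simp: DLB_Cons_Cons)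

lemma HLB_Cons_Cons:
  assumes "even (length t)"
  shows "HLB \<delta> (a # b # t) = (if a \<and> b then 2 + HLB \<delta> t else if \<not> a \<and> \<not> b then 0 else 2 - \<delta>)"
  using DLB_le_length[OF assms] odd_pos[of "DLB t"]
  by (cases "DLB t = length t"; cases "odd (DLB t)")
     (auto simp: HLB_def Let_def DLB_Cons_Cons of_nat_diff)

lemma DLB_replicate_True_append: "DLB (replicate (2*j) True @ w) = 2*j + DLB w"
  by (induction j) (auto simp: DLB_Cons_Cons numeral_2_eq_2)

lemma HLB_replicate_True_append:
  "even (length w) \<Longrightarrow> HLB \<delta> (replicate (2*j) True @ w) = 2*j + HLB \<delta> w"
proof (induction j)
  case (Suc j)
  have "replicate (2 * Suc j) True @ w = True # True # (replicate (2*j) True @ w)"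
    by (simp add: numeral_2_eq_2)
  moreover have "even (length (replicate (2*j) True @ w))"
    using Suc.prems by simp
  ultimately show ?case
    using Suc by (simp add: HLB_Cons_Cons)
qed simp

lemma DLB_append_less:
  "even (length w) \<Longrightarrow> i < length w \<Longrightarrow> \<not> w ! i \<Longrightarrow> DLB (w @ r) < length w"
proof (induction w arbitrary: i rule: induct_list012)
  case (3 a b t)
  show ?case
  proof (cases "a \<and> b")
    case True
    with "3.prems" have "2 \<le> i"
      by (auto simp: nth_Cons' split: if_splits)
    then obtain i' where "i = i' + 2"
      by (metis le_add_diff_inverse2)
    with "3.prems" have "DLB (t @ r) < length t"
      by (intro "3.IH"(1)[of i']) auto
    with True show ?thesis
      by (simp add: DLB_Cons_Cons)
  qed (auto simp: DLB_Cons_Cons)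
qed simp_all

lemma take_DLB_even:
  "even (length x) \<Longrightarrow> DLB x = 2*j \<Longrightarrow> 2*j < length x \<Longrightarrow>
    take (2*j+2) x = replicate (2*j) True @ [x ! (2*j), \<not> x ! (2*j)]"
proof (induction j arbitrary: x)
  case 0
  then obtain a b t where "x = a # b # t"
    by (cases x rule: remdups_adj.cases) auto
  with 0 show ?case
    by (auto simp: DLB_Cons_Cons split: if_splits)
next
  case (Suc j)
  then obtain a b t where x: "x = a # b # t"
    by (cases x rule: remdups_adj.cases) auto
  with Suc.prems have "a \<and> b" "DLB t = 2*j"
    by (auto simp: DLB_Cons_Cons split: if_splits)
  with Suc.prems x have "take (2*j+2) t = replicate (2*j) True @ [t ! (2*j), \<not> t ! (2*j)]"
    by (intro Suc.IH) auto
  with x \<open>a \<and> b\<close> show ?case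
    by (simp add: numeral_2_eq_2)
qed

definition gain :: "real \<Rightarrow> bool list \<Rightarrow> bool list \<Rightarrow> real" where
  "gain \<delta> x y = (if DLB x \<le> DLB y then HLB \<delta> y - HLB \<delta> x else 0)"

definition block_flip :: "nat \<Rightarrow> bool \<Rightarrow> bool list" where
  "block_flip m b = replicate (2*m) False @ [b, \<not> b]"

lemma length_xor_bits [simp]: "length (xor_bits x z) = min (length x) (length z)"
  by (simp add: xor_bits_def)

lemma nth_xor_bits [simp]:
  "i < length x \<Longrightarrow> i < length z \<Longrightarrow> xor_bits x z ! i = (x ! i \<noteq> z ! i)"
  by (simp add: xor_bits_def)

lemma xor_bits_append:
  "length x = length z \<Longrightarrow> xor_bits (x @ y) (z @ w) = xor_bits x z @ xor_bits y w"
  by (simp add: xor_bits_def)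

lemma xor_bits_commute: "xor_bits x z = xor_bits z x"
  by (rule nth_equalityI) auto

lemma xor_bits_cancel: "length x = length z \<Longrightarrow> xor_bits (xor_bits x z) z = x"
  by (rule nth_equalityI) auto

lemma xor_bits_self: "xor_bits x x = replicate (length x) False"
  by (rule nth_equalityI) auto

lemma xor_bits_replicate_False: "length x = k \<Longrightarrow> xor_bits (replicate k False) x = x"
  by (rule nth_equalityI) auto

lemma gain_block:
  assumes "even (length w)" "even (length w')"
  shows "gain \<delta> (replicate (2*m) True @ a # (\<not> a) # w) (replicate (2*m) True @ a' # b' # w')
    = (if a' \<and> b' then \<delta> + HLB \<delta> w' else if \<not> a' \<and> \<not> b' then \<delta> - 2 else 0)"
  using assms
  by (simp add: gain_def DLB_replicate_True_append HLB_replicate_True_append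
      DLB_Cons_Cons HLB_Cons_Cons)

lemma gain_block_flip:
  assumes "even (length v)" "even (length w)"
  shows "gain \<delta> (replicate (2*m) True @ a # (\<not> a) # v)
      (xor_bits (block_flip m b) (replicate (2*m) True @ [a, \<not> a]) @ w)
    = (if b = a then \<delta> - 2 else \<delta> + HLB \<delta> w)"
proof -
  have "xor_bits (block_flip m b) (replicate (2*m) True @ [a, \<not> a])
      = replicate (2*m) True @ [b \<noteq> a, b \<noteq> a]"
    by (simp add: block_flip_def xor_bits_append xor_bits_replicate_False) (simp add: xor_bits_def)
  then show ?thesis
    using gain_block[OF assms] by auto
qed

lemma gain_eq_0_unless_block_flip:
  assumes s: "length s = 2*m+2" "s \<notin> range (block_flip m)"
    and "even (length v)" "even (length w)"
  shows "gain \<delta> (replicate (2*m) True @ a # (\<not> a) # v)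
      (xor_bits s (replicate (2*m) True @ [a, \<not> a]) @ w) = 0"
proof -
  let ?x = "replicate (2*m) True @ a # (\<not> a) # v"
  let ?y = "xor_bits s (replicate (2*m) True @ [a, \<not> a])"
  have DLB_x: "DLB ?x = 2*m"
    by (simp add: DLB_replicate_True_append DLB_Cons_Cons)
  show ?thesis
  proof (cases "\<exists>i<2*m. s ! i")
    case True
    then obtain i where "i < 2*m" "s ! i"
      by blast
    with s have "DLB (take (2*m) ?y @ (drop (2*m) ?y @ w)) < length (take (2*m) ?y)"
      by (intro DLB_append_less[of _ i]) (auto simp: nth_append)
    moreover have "take (2*m) ?y @ (drop (2*m) ?y @ w) = ?y @ w"
      by (simp flip: append_assoc)
    ultimately have "DLB (?y @ w) < DLB ?x"
      using s by (simp add: DLB_x)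
    then show ?thesis
      by (simp add: gain_def)
  next
    case False
    with s have "s = replicate (2*m) False @ [s ! (2*m), s ! (2*m+1)]"
      by (intro nth_equalityI) (auto simp: nth_append less_Suc_eq)
    then obtain e f where s_eq: "s = replicate (2*m) False @ [e, f]"
      by blast
    have "f = e"
    proof (rule ccontr)
      assume "f \<noteq> e"
      then have "s = block_flip m e"
        by (auto simp: s_eq block_flip_def)
      with s(2) show False
        by blast
    qed
    then have "?y = replicate (2*m) True @ [e \<noteq> a, e = a]"
      by (auto simp: s_eq xor_bits_append xor_bits_replicate_False xor_bits_def)
    then show ?thesis
      using gain_block[OF assms(3,4)] by auto
  qed
qed

section \<open>Sums over bit strings\<close>

definition bitstrings :: "nat \<Rightarrow> bool list set" where
  "bitstrings k = {xs. length xs = k}"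

lemma bitstrings_eq_lists: "bitstrings k = {xs. set xs \<subseteq> UNIV \<and> length xs = k}"
  by (simp add: bitstrings_def)

lemma finite_bitstrings [simp]: "finite (bitstrings k)"
  unfolding bitstrings_eq_lists by (rule finite_lists_length_eq) simp

lemma card_bitstrings: "card (bitstrings k) = 2 ^ k"
  unfolding bitstrings_eq_lists by (subst card_lists_length_eq) simp_all

lemma bitstrings_0: "bitstrings 0 = {[]}"
  by (auto simp: bitstrings_def)

lemma bitstrings_Suc: "bitstrings (Suc k) = Cons True ` bitstrings k \<union> Cons False ` bitstrings k"
proof -
  have "xs \<in> Cons True ` bitstrings k \<union> Cons False ` bitstrings k" if "length xs = Suc k" for xs
    using that by (cases xs) (auto simp: bitstrings_def)
  then show ?thesis
    by (auto simp: bitstrings_def)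
qed

lemma sum_bitstrings_Suc:
  "(\<Sum>s\<in>bitstrings (Suc k). f s) = (\<Sum>s\<in>bitstrings k. f (True # s)) + (\<Sum>s\<in>bitstrings k. f (False # s))"
  unfolding bitstrings_Suc
  by (subst sum.union_disjoint) (auto simp: sum.reindex)

lemma sum_bitstrings_append:
  "(\<Sum>s\<in>bitstrings (j + k). f s) = (\<Sum>u\<in>bitstrings j. \<Sum>v\<in>bitstrings k. f (u @ v))"
  by (induction j arbitrary: f) (simp_all add: bitstrings_0 sum_bitstrings_Suc)

lemma sum_bitstrings_xor:
  "length z = k \<Longrightarrow> (\<Sum>s\<in>bitstrings k. f (xor_bits s z)) = (\<Sum>s\<in>bitstrings k. f s)"
  by (rule sum.reindex_bij_witness[where i="\<lambda>s. xor_bits s z" and j="\<lambda>s. xor_bits s z"])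
     (auto simp: bitstrings_def xor_bits_cancel)

lemma sum_bitstrings_count:
  fixes f :: "nat \<Rightarrow> 'a::comm_semiring_1"
  shows "(\<Sum>s\<in>bitstrings t. f (count_list s True)) = (\<Sum>k\<le>t. of_nat (t choose k) * f k)"
proof (induction t arbitrary: f)
  case 0
  then show ?case
    by (simp add: bitstrings_0)
next
  case (Suc t)
  have shift: "(\<Sum>k\<le>Suc t. of_nat (Suc t choose k) * f k)
      = f 0 + (\<Sum>k\<le>t. of_nat (t choose k) * f (Suc k)) + (\<Sum>k\<le>t. of_nat (t choose Suc k) * f (Suc k))"
    by (subst sum.atMost_Suc_shift) (simp add: sum.distrib distrib_right add.assoc)
  have "(\<Sum>s\<in>bitstrings (Suc t). f (count_list s True))
      = (\<Sum>s\<in>bitstrings t. f (Suc (count_list s True))) + (\<Sum>s\<in>bitstrings t. f (count_list s True))"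
    by (simp add: sum_bitstrings_Suc)
  also have "\<dots> = (\<Sum>k\<le>t. of_nat (t choose k) * f (Suc k))
      + (f 0 + (\<Sum>k\<le>t. of_nat (t choose Suc k) * f (Suc k)))"
    using Suc[of f] Suc[of "\<lambda>k. f (Suc k)"] sum.atMost_Suc_shift[of "\<lambda>k. of_nat (t choose k) * f k" t]
    by (simp add: binomial_eq_0)
  also have "\<dots> = (\<Sum>k\<le>Suc t. of_nat (Suc t choose k) * f k)"
    unfolding shift by (simp add: add_ac)
  finally show ?case .
qed

lemma sum_HLB_bitstrings_le:
  assumes "0 \<le> \<delta>" "even k"
  shows "(\<Sum>v\<in>bitstrings k. HLB \<delta> v) \<le> 2 * 2 ^ k"
proof -
  obtain j where "k = 2*j"
    using assms(2) by blast
  moreover have "(\<Sum>v\<in>bitstrings (2*j). HLB \<delta> v) \<le> 2 * 2 ^ (2*j)"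
  proof (induction j)
    case 0
    then show ?case
      by (simp add: bitstrings_0 HLB_def)
  next
    case (Suc j)
    have "(\<Sum>v\<in>bitstrings (2 * Suc j). HLB \<delta> v)
        = (\<Sum>v\<in>bitstrings (2*j). HLB \<delta> (True # True # v) + HLB \<delta> (True # False # v)
            + HLB \<delta> (False # True # v) + HLB \<delta> (False # False # v))"
      by (simp add: sum_bitstrings_Suc sum.distrib)
    also have "\<dots> = (\<Sum>v\<in>bitstrings (2*j). HLB \<delta> v + (6 - 2*\<delta>))"
      by (intro sum.cong refl) (simp add: HLB_Cons_Cons bitstrings_def)
    also have "\<dots> = (\<Sum>v\<in>bitstrings (2*j). HLB \<delta> v) + 2 ^ (2*j) * (6 - 2*\<delta>)"
      by (simp add: sum.distrib card_bitstrings)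
    also have "\<dots> \<le> 2 * 2 ^ (2*j) + 2 ^ (2*j) * 6"
      using Suc assms(1) by (intro add_mono mult_left_mono) auto
    also have "\<dots> = 2 * 2 ^ (2 * Suc j)"
      by simp
    finally show ?case .
  qed
  ultimately show ?thesis
    by simp
qed

section \<open>Permutation-invariant masks\<close>

lemma binomial_Suc_mult_eq: "Suc j * (a choose Suc j) = (a - j) * (a choose j)"
  by (simp only: binomial_absorption binomial_absorb_comp)

lemma two_power_mult_binomial_le: "2 ^ j * (t choose j) \<le> (2*t+1) choose j"
proof (induction j)
  case (Suc j)
  have "Suc j * (2 ^ Suc j * (t choose Suc j)) = 2 * 2 ^ j * (Suc j * (t choose Suc j))"
    by (simp only: power_Suc mult_ac)
  also have "\<dots> = 2 * (t - j) * (2 ^ j * (t choose j))"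
    by (simp only: binomial_Suc_mult_eq mult_ac)
  also have "\<dots> \<le> 2 * (t - j) * ((2*t+1) choose j)"
    using Suc.IH by (intro mult_left_mono) auto
  also have "\<dots> \<le> (2*t+1 - j) * ((2*t+1) choose j)"
    by (intro mult_right_mono) auto
  also have "\<dots> = Suc j * ((2*t+1) choose Suc j)"
    by (simp only: binomial_Suc_mult_eq)
  finally show ?case
    by (simp only: Suc_mult_le_cancel1)
qed simp

lemma mult_binomial_le_binomial_Suc:
  assumes "2*t + 2 \<le> n"
  shows "n * (t choose j) \<le> n choose Suc j"
proof -
  have "Suc j \<le> 2 ^ j"
    using less_exp[of j] by (rule Suc_leI)
  then have "Suc j * (n * (t choose j)) \<le> n * (2 ^ j * (t choose j))"
    using mult_le_mono1[of "Suc j" "2 ^ j" "n * (t choose j)"] by (simp add: mult_ac)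
  also have "\<dots> \<le> n * ((n - 1) choose j)"
    using two_power_mult_binomial_le[of j t] binomial_right_mono[of "2*t+1" "n - 1" j] assms
    by (intro mult_left_mono) (auto intro: order.trans)
  also have "\<dots> = Suc j * (n choose Suc j)"
    by (simp only: binomial_absorption)
  finally show ?thesis
    by (simp only: Suc_mult_le_cancel1)
qed

definition perm_invariant :: "nat \<Rightarrow> bool list pmf \<Rightarrow> bool" where
  "perm_invariant n W \<longleftrightarrow>
     (\<forall>\<sigma> s. \<sigma> permutes {..<n} \<and> length s = n \<longrightarrow> pmf W (perm_bits \<sigma> s) = pmf W s)"

lemma mset_eq_if_count_True_eq:
  fixes s s' :: "bool list"
  assumes "length s = length s'" "count_list s True = count_list s' True"
  shows "mset s = mset s'"
proof (rule multiset_eqI)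
  have count_False: "count_list s False = length s - count_list s True" for s :: "bool list"
    by (induction s) (auto simp: Suc_diff_le count_le_length)
  show "count (mset s) b = count (mset s') b" for b
    using assms by (cases b) (simp_all add: count_mset count_False)
qed

lemma perm_invariant_pmf_eq:
  assumes "perm_invariant n W" "length s = n" "length s' = n"
    and "count_list s True = count_list s' True"
  shows "pmf W s = pmf W s'"
proof -
  obtain \<sigma> where "\<sigma> permutes {..<length s}" "permute_list \<sigma> s = s'"
    using mset_eq_permutation mset_eq_if_count_True_eq assms(2-4) by metis
  with assms(1,2) show ?thesis
    by (auto simp: perm_invariant_def perm_bits_def permute_list_def)
qed

lemma perm_invariant_prefix_mass_le:
  assumes W: "set_pmf W \<subseteq> bitstrings (r + t)" "perm_invariant (r + t) W"
    and p: "length p = r" "count_list p True = 1"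
    and "2*t + 2 \<le> r + t"
  shows "real (r + t) * (\<Sum>v\<in>bitstrings t. pmf W (p @ v)) \<le> 1"
proof -
  define n where "n = r + t"
  define w where "w k = pmf W (replicate k True @ replicate (n - k) False)" for k
  have pmf_w: "pmf W s = w (count_list s True)" if "length s = n" for s
    using that W(2) count_le_length[of s True]
    by (auto simp: w_def n_def count_list_eq_length_filter intro!: perm_invariant_pmf_eq)
  have "1 = (\<Sum>s\<in>bitstrings n. pmf W s)"
    using W(1) by (simp add: sum_pmf_eq_1 n_def)
  also have "\<dots> = (\<Sum>k\<le>n. real (n choose k) * w k)"
    by (simp add: pmf_w bitstrings_def sum_bitstrings_count[unfolded bitstrings_def])
  finally have total: "(\<Sum>k\<le>n. real (n choose k) * w k) = 1" ..
  have "real n * (\<Sum>v\<in>bitstrings t. pmf W (p @ v))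
      = real n * (\<Sum>v\<in>bitstrings t. w (Suc (count_list v True)))"
    using p by (simp add: pmf_w n_def bitstrings_def)
  also have "\<dots> = (\<Sum>j\<le>t. real (n * (t choose j)) * w (Suc j))"
    unfolding sum_bitstrings_count[of "\<lambda>k. w (Suc k)"] by (simp add: sum_distrib_left mult_ac)
  also have "\<dots> \<le> (\<Sum>j\<le>t. real (n choose Suc j) * w (Suc j))"
  proof (intro sum_mono mult_right_mono)
    show "real (n * (t choose j)) \<le> real (n choose Suc j)" for j
      using mult_binomial_le_binomial_Suc[of t n j] assms(5) by (simp only: of_nat_le_iff n_def)
  qed (simp add: w_def)
  also have "\<dots> = (\<Sum>k\<in>Suc ` {..t}. real (n choose k) * w k)"
    by (simp add: sum.reindex)
  also have "\<dots> \<le> (\<Sum>k\<le>n. real (n choose k) * w k)"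
    using assms(5) by (intro sum_mono2) (auto simp: n_def w_def)
  finally show ?thesis
    using total by (simp add: n_def)
qed

section \<open>Unary unbiased operators on a prefix-uniform parent\<close>

lemma unary_unbiased_pmf_xor:
  assumes "unary_unbiased n V" "length x = n" "length y = n"
  shows "pmf (V x) y = pmf (V (replicate n False)) (xor_bits y x)"
proof -
  have "pmf (V x) y = pmf (V (xor_bits x x)) (xor_bits y x)"
    using assms unfolding unary_unbiased_def by blast
  then show ?thesis
    using assms(2) by (simp add: xor_bits_self)
qed

lemma unary_unbiased_perm_invariant:
  assumes "unary_unbiased n V"
  shows "perm_invariant n (V (replicate n False))"
  unfolding perm_invariant_def
proof (intro allI impI)
  fix \<sigma> :: "nat \<Rightarrow> nat" and s :: "bool list"
  assume \<sigma>: "\<sigma> permutes {..<n} \<and> length s = n"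
  then have "\<sigma> i < n" if "i < n" for i
    using permutes_in_image[of \<sigma> "{..<n}" i] that by simp
  then have "perm_bits \<sigma> (replicate n False) = replicate n False"
    by (intro nth_equalityI) (auto simp: perm_bits_def)
  with assms \<sigma> show "pmf (V (replicate n False)) (perm_bits \<sigma> s) = pmf (V (replicate n False)) s"
    unfolding unary_unbiased_def by (metis length_replicate)
qed

lemma set_pmf_unary_unbiased:
  "unary_unbiased n V \<Longrightarrow> length x = n \<Longrightarrow> set_pmf (V x) \<subseteq> bitstrings n"
  by (auto simp: unary_unbiased_def bitstrings_def)

lemma pmf_bind_Pair:
  "pmf (bind_pmf X (\<lambda>x. map_pmf (Pair x) (V x))) (x, y) = pmf X x * pmf (V x) y"
proof -
  have "pmf (map_pmf (Pair x') (V x')) (x, y) = (if x' = x then pmf (V x) y else 0)" for x'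
    using pmf_map_inj'[of "Pair x" "V x" y] by (auto simp: pmf_eq_0_set_pmf intro: injI)
  then have "pmf (bind_pmf X (\<lambda>x. map_pmf (Pair x) (V x))) (x, y)
      = (\<integral>x'. (if x' = x then pmf (V x) y else 0) \<partial>measure_pmf X)"
    by (simp add: pmf_bind)
  also have "\<dots> = pmf X x * pmf (V x) y"
    by (subst integral_measure_pmf_real[of "{x}"]) (auto split: if_splits)
  finally show ?thesis .
qed

lemma expectation_unary_unbiased:
  assumes V: "unary_unbiased n V" and X: "set_pmf X \<subseteq> bitstrings n"
  shows "measure_pmf.expectation (bind_pmf X (\<lambda>x. map_pmf (Pair x) (V x))) (\<lambda>(x, y). f x y)
    = (\<Sum>x\<in>bitstrings n. pmf X x *
        (\<Sum>s\<in>bitstrings n. pmf (V (replicate n False)) s * f x (xor_bits s x)))"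
proof -
  let ?M = "bind_pmf X (\<lambda>x. map_pmf (Pair x) (V x))"
  let ?W = "V (replicate n False)"
  have "set_pmf ?M \<subseteq> bitstrings n \<times> bitstrings n"
    using X set_pmf_unary_unbiased[OF V] by (fastforce simp: bitstrings_def)
  then have "measure_pmf.expectation ?M (\<lambda>(x, y). f x y)
      = (\<Sum>p\<in>bitstrings n \<times> bitstrings n. (case p of (x, y) \<Rightarrow> f x y) * pmf ?M p)"
    by (intro integral_measure_pmf_real) auto
  also have "\<dots> = (\<Sum>(x, y)\<in>bitstrings n \<times> bitstrings n. f x y * (pmf X x * pmf (V x) y))"
    by (intro sum.cong refl) (clarsimp simp: pmf_bind_Pair)
  also have "\<dots> = (\<Sum>x\<in>bitstrings n. \<Sum>y\<in>bitstrings n. f x y * (pmf X x * pmf (V x) y))"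
    by (simp only: sum.cartesian_product)
  also have "\<dots> = (\<Sum>x\<in>bitstrings n. pmf X x * (\<Sum>s\<in>bitstrings n. pmf ?W s * f x (xor_bits s x)))"
  proof (intro sum.cong refl)
    fix x assume x: "x \<in> bitstrings n"
    have V_x: "pmf (V x) y = pmf ?W (xor_bits y x)" if "y \<in> bitstrings n" for y
      by (rule unary_unbiased_pmf_xor[OF V]) (use x that in \<open>simp_all add: bitstrings_def\<close>)
    have "(\<Sum>y\<in>bitstrings n. f x y * (pmf X x * pmf (V x) y))
        = pmf X x * (\<Sum>y\<in>bitstrings n. pmf ?W (xor_bits y x) * f x (xor_bits (xor_bits y x) x))"
      unfolding sum_distrib_left
      using x by (intro sum.cong refl) (simp add: V_x bitstrings_def xor_bits_cancel)
    also have "\<dots> = pmf X x * (\<Sum>s\<in>bitstrings n. pmf ?W s * f x (xor_bits s x))"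
      using x sum_bitstrings_xor[of x n "\<lambda>s. pmf ?W s * f x (xor_bits s x)"]
      by (simp add: bitstrings_def)
    finally show "(\<Sum>y\<in>bitstrings n. f x y * (pmf X x * pmf (V x) y))
        = pmf X x * (\<Sum>s\<in>bitstrings n. pmf ?W s * f x (xor_bits s x))" .
  qed
  finally show ?thesis .
qed

lemma sum_pmf_uniform_suffix_le:
  fixes X :: "bool list pmf"
  assumes X: "set_pmf X \<subseteq> bitstrings (k + t)"
    and uniform: "\<And>u v. u \<in> bitstrings k \<Longrightarrow> v \<in> bitstrings t \<Longrightarrow>
      pmf X (u @ v) = measure_pmf.prob X {x. take k x = u} / 2 ^ t"
    and bound: "\<And>x. x \<in> set_pmf X \<Longrightarrow> (\<Sum>v\<in>bitstrings t. f (take k x @ v)) \<le> 2 ^ t * B"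
  shows "(\<Sum>x\<in>bitstrings (k + t). pmf X x * f x) \<le> B"
proof -
  define Q where "Q u = measure_pmf.prob X {x. take k x = u}" for u
  have split: "(\<Sum>x\<in>bitstrings (k + t). pmf X x * g x)
      = (\<Sum>u\<in>bitstrings k. Q u * ((\<Sum>v\<in>bitstrings t. g (u @ v)) / 2 ^ t))" for g
    by (simp add: sum_bitstrings_append uniform Q_def sum_distrib_left sum_divide_distrib)
  have "(\<Sum>u\<in>bitstrings k. Q u) = (\<Sum>x\<in>bitstrings (k + t). pmf X x)"
    using split[of "\<lambda>_. 1"] by (simp add: card_bitstrings)
  also have "\<dots> = 1"
    using X by (simp add: sum_pmf_eq_1)
  finally have Q_sum: "(\<Sum>u\<in>bitstrings k. Q u) = 1" .
  have "(\<Sum>x\<in>bitstrings (k + t). pmf X x * f x) \<le> (\<Sum>u\<in>bitstrings k. Q u * B)"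
    unfolding split
  proof (intro sum_mono)
    fix u
    show "Q u * ((\<Sum>v\<in>bitstrings t. f (u @ v)) / 2 ^ t) \<le> Q u * B"
    proof (cases "Q u = 0")
      case False
      then obtain x where "x \<in> set_pmf X" "take k x = u"
        unfolding Q_def measure_pmf_zero_iff by blast
      then have "(\<Sum>v\<in>bitstrings t. f (u @ v)) \<le> 2 ^ t * B"
        using bound by blast
      then have "(\<Sum>v\<in>bitstrings t. f (u @ v)) / 2 ^ t \<le> B"
        by (simp add: divide_le_eq mult.commute)
      then show ?thesis
        by (intro mult_left_mono) (auto simp: Q_def)
    qed simp
  qed
  also have "\<dots> = B"
    using Q_sum by (simp add: sum_distrib_right[symmetric])
  finally show ?thesis .
qed

lemma sum_gain_block_flip_le:
  assumes "even t" "0 \<le> \<delta>" "length sv = t"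
  shows "(\<Sum>v\<in>bitstrings t. gain \<delta> (replicate (2*m) True @ a # (\<not> a) # v)
      (xor_bits (block_flip m b) (replicate (2*m) True @ [a, \<not> a]) @ xor_bits sv v))
    \<le> 2 ^ t * (if b = a then \<delta> - 2 else \<delta> + 2)"
proof -
  have "(\<Sum>v\<in>bitstrings t. gain \<delta> (replicate (2*m) True @ a # (\<not> a) # v)
      (xor_bits (block_flip m b) (replicate (2*m) True @ [a, \<not> a]) @ xor_bits sv v))
    = (\<Sum>v\<in>bitstrings t. if b = a then \<delta> - 2 else \<delta> + HLB \<delta> (xor_bits v sv))"
    using assms by (intro sum.cong refl) (simp add: gain_block_flip bitstrings_def xor_bits_commute)
  also have "\<dots> \<le> 2 ^ t * (if b = a then \<delta> - 2 else \<delta> + 2)"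
  proof (cases "b = a")
    case False
    have "(\<Sum>v\<in>bitstrings t. HLB \<delta> (xor_bits v sv)) \<le> 2 * 2 ^ t"
      using sum_HLB_bitstrings_le[OF assms(2,1)] by (simp add: sum_bitstrings_xor assms(3))
    with False show ?thesis
      by (simp add: sum.distrib card_bitstrings algebra_simps)
  qed (simp add: card_bitstrings)
  finally show ?thesis .
qed

lemma sum_gain_eq_sum_block_flips:
  fixes W :: "bool list pmf" and m t :: nat and a :: bool
  defines "u \<equiv> replicate (2*m) True @ [a, \<not> a]"
  assumes "even t"
  shows "(\<Sum>v\<in>bitstrings t. \<Sum>s\<in>bitstrings (2*m+2 + t). pmf W s * gain \<delta> (u @ v) (xor_bits s (u @ v)))
    = (\<Sum>b\<in>UNIV. \<Sum>sv\<in>bitstrings t. pmf W (block_flip m b @ sv) *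
        (\<Sum>v\<in>bitstrings t. gain \<delta> (u @ v) (xor_bits (block_flip m b) u @ xor_bits sv v)))"
proof -
  define G where
    "G su sv = (\<Sum>v\<in>bitstrings t. gain \<delta> (u @ v) (xor_bits su u @ xor_bits sv v))" for su sv
  have length_u: "length u = 2*m+2"
    by (simp add: u_def)
  have "(\<Sum>v\<in>bitstrings t. \<Sum>s\<in>bitstrings (2*m+2 + t). pmf W s * gain \<delta> (u @ v) (xor_bits s (u @ v)))
      = (\<Sum>s\<in>bitstrings (2*m+2 + t). pmf W s * (\<Sum>v\<in>bitstrings t. gain \<delta> (u @ v) (xor_bits s (u @ v))))"
    by (subst sum.swap) (simp add: sum_distrib_left)
  also have "\<dots> = (\<Sum>su\<in>bitstrings (2*m+2). \<Sum>sv\<in>bitstrings t. pmf W (su @ sv) * G su sv)"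
    unfolding sum_bitstrings_append[where j = "2*m+2" and k = t] G_def
    by (intro sum.cong refl) (simp add: xor_bits_append length_u bitstrings_def)
  also have "\<dots> = (\<Sum>su\<in>range (block_flip m). \<Sum>sv\<in>bitstrings t. pmf W (su @ sv) * G su sv)"
  proof (intro sum.mono_neutral_right ballI)
    show "range (block_flip m) \<subseteq> bitstrings (2*m+2)"
      by (auto simp: bitstrings_def block_flip_def)
    fix su assume su: "su \<in> bitstrings (2*m+2) - range (block_flip m)"
    have "G su sv = 0" if "sv \<in> bitstrings t" for sv
      unfolding G_def u_def
      by (intro sum.neutral ballI)
         (use su that assms(2) in \<open>simp add: bitstrings_def gain_eq_0_unless_block_flip\<close>)
    then show "(\<Sum>sv\<in>bitstrings t. pmf W (su @ sv) * G su sv) = 0"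
      by simp
  qed simp
  also have "\<dots> = (\<Sum>b\<in>UNIV. \<Sum>sv\<in>bitstrings t. pmf W (block_flip m b @ sv) * G (block_flip m b) sv)"
    by (subst sum.reindex) (auto simp: inj_def block_flip_def)
  finally show ?thesis
    by (simp only: G_def)
qed

lemma sum_gain_prefix_le:
  fixes W :: "bool list pmf" and m t :: nat and a :: bool
  defines "u \<equiv> replicate (2*m) True @ [a, \<not> a]"
  assumes W: "set_pmf W \<subseteq> bitstrings (2*m+2 + t)" "perm_invariant (2*m+2 + t) W"
    and t: "even t" "t \<le> 2*m" and "0 \<le> \<delta>"
  shows "(\<Sum>v\<in>bitstrings t. \<Sum>s\<in>bitstrings (2*m+2 + t). pmf W s * gain \<delta> (u @ v) (xor_bits s (u @ v)))
    \<le> 2 ^ t * (2 * \<delta> / (2*m+2 + t))"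
proof -
  define P where "P b = (\<Sum>sv\<in>bitstrings t. pmf W (block_flip m b @ sv))" for b
  have "P (\<not> a) = P a"
    unfolding P_def using W(2)
    by (intro sum.cong refl perm_invariant_pmf_eq) (auto simp: bitstrings_def block_flip_def)
  have "real (2*m+2 + t) * P a \<le> 1"
    unfolding P_def using W t
    by (intro perm_invariant_prefix_mass_le) (auto simp: block_flip_def)
  then have P_le: "P a \<le> 1 / (2*m+2 + t)"
    by (simp add: field_simps)
  have "(\<Sum>v\<in>bitstrings t. \<Sum>s\<in>bitstrings (2*m+2 + t). pmf W s * gain \<delta> (u @ v) (xor_bits s (u @ v)))
      = (\<Sum>b\<in>UNIV. \<Sum>sv\<in>bitstrings t. pmf W (block_flip m b @ sv) *
          (\<Sum>v\<in>bitstrings t. gain \<delta> (u @ v) (xor_bits (block_flip m b) u @ xor_bits sv v)))"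
    unfolding u_def by (rule sum_gain_eq_sum_block_flips[OF t(1)])
  also have "\<dots> \<le> (\<Sum>b\<in>UNIV. P b * (2 ^ t * (if b = a then \<delta> - 2 else \<delta> + 2)))"
    unfolding P_def sum_distrib_right
    using sum_gain_block_flip_le[OF t(1) \<open>0 \<le> \<delta>\<close>]
    by (intro sum_mono mult_left_mono) (auto simp: u_def bitstrings_def)
  also have "\<dots> = 2 ^ t * (2 * \<delta>) * P a"
    using \<open>P (\<not> a) = P a\<close> by (cases a) (simp_all add: UNIV_bool algebra_simps)
  also have "\<dots> \<le> 2 ^ t * (2 * \<delta>) * (1 / (2*m+2 + t))"
    using P_le \<open>0 \<le> \<delta>\<close> by (intro mult_left_mono) auto
  finally show ?thesis
    by simp
qed

theorem lemma7:
  fixes n m :: nat and \<delta> :: real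
    and X :: "bool list pmf" and V :: "bool list \<Rightarrow> bool list pmf"
  assumes "even n" and "n > 0"
    and "real n / 4 \<le> real m" and "m + 1 \<le> n div 2"
    and "0 < \<delta>" and "\<delta> < 2"
    and "set_pmf X \<subseteq> {x. length x = n \<and> DLB x = 2*m}"
    and "\<forall>z. length z = n \<longrightarrow>
           pmf X z = measure_pmf.prob X {x. take (2*m+2) x = take (2*m+2) z}
                     / 2 ^ (n - (2*m+2))"
    and "unary_unbiased n V"
  shows "measure_pmf.expectation (bind_pmf X (\<lambda>x. map_pmf (\<lambda>y. (x, y)) (V x)))
           (\<lambda>(x, y). (HLB \<delta> y - HLB \<delta> x) * (if DLB y \<ge> DLB x then 1 else 0))
         \<le> 2 * \<delta> / real n"
proof -
  define t where "t = n - (2*m+2)"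
  define W where "W = V (replicate n False)"
  have n: "n = 2*m+2 + t" and t: "even t" "t \<le> 2*m"
    using assms(1,3,4) by (auto simp: t_def)
  have X: "set_pmf X \<subseteq> bitstrings n"
    using assms(7) by (auto simp: bitstrings_def)
  have W: "set_pmf W \<subseteq> bitstrings n" "perm_invariant n W"
    using set_pmf_unary_unbiased[OF assms(9)] unary_unbiased_perm_invariant[OF assms(9)]
    by (simp_all add: W_def)
  have integrand: "(\<lambda>(x, y). (HLB \<delta> y - HLB \<delta> x) * (if DLB y \<ge> DLB x then 1 else 0))
      = (\<lambda>(x, y). gain \<delta> x y)"
    by (simp add: gain_def fun_eq_iff)
  have "(\<Sum>x\<in>bitstrings n. pmf X x * (\<Sum>s\<in>bitstrings n. pmf W s * gain \<delta> x (xor_bits s x)))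
      \<le> 2 * \<delta> / real n"
    unfolding n
  proof (rule sum_pmf_uniform_suffix_le, goal_cases support uniform bound)
    case support
    then show ?case using X n by simp
  next
    case (uniform u v)
    then show ?case using assms(8)[rule_format, of "u @ v"] n by (simp add: bitstrings_def)
  next
    case (bound x)
    with assms(1,7) n have "take (2*m+2) x = replicate (2*m) True @ [x ! (2*m), \<not> x ! (2*m)]"
      by (intro take_DLB_even) auto
    then show ?case
      using sum_gain_prefix_le[where a = "x ! (2*m)"] W t assms(5) n by simp
  qed
  then show ?thesis
    unfolding integrand W_def expectation_unary_unbiased[OF assms(9) X] .
qed

end
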